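(* For each integer $N\ge 1$, let $S_N^{\mathrm{quant}}$ be the $N\times N$ real matrix with entries \[ (S_N^{\mathrm{quant}})_{m,n} = \frac{\sin\frac{\pi}{N}}{\sin \frac{\pi}{N}(m+n-1)} \quad (m+n\neq N+1), \qquad (S_N^{\mathrm{quant}})_{m,n}=0 \quad (m+n=N+1), \] $m,n=1,\dots,N$ (so the entries on the anti-diagonal are zero). Then the set of eigenvalues of $S_N^{\mathrm{quant}}$ is \[ \left\{ (N-1)\sin\tfrac{\pi}{N},\ (N-3)\sin\tfrac{\pi}{N},\ \ldots,\ (3-N)\sin\tfrac{\pi}{N},\ (1-N)\sin\tfrac{\pi}{N}\right\}, \] i.e. $\{(N+1-2k)\sin\frac{\pi}{N} : k=1,\dots,N\}$. *)

theory Defs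
  imports Complex_Main "Jordan_Normal_Form.Char_Poly"
begin

text \<open>The matrix S_N^quant, with 0-based indices i = m-1, j = n-1.\<close>
definition S_quant :: "nat \<Rightarrow> real mat" where
  "S_quant N = mat N N (\<lambda>(i, j).
      if i + j + 2 = N + 1 then 0
      else sin (pi / real N) / sin (pi / real N * (real (i + 1) + real (j + 1) - 1)))"

end

theory Submission
  imports Defs
begin

text \<open>
  The matrix is a Hankel matrix; reversing the order of its columns turns it into a matrix whose
  off-diagonal entry in row \<open>i\<close>, column \<open>j\<close> is \<open>sin \<theta> / sin (\<theta> (i - j))\<close> with \<open>\<theta> = \<pi>/N\<close>, a kernel that
  is anti-periodic with period \<open>N\<close>. Against it the vectors
  \<open>v\<^sub>j = cos (\<alpha> (j + 1/2) - \<pi>/4)\<close> with \<open>\<alpha> = (2k - 1) \<pi>/N\<close> are eigenvectors: the row sums reduce to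
  \<open>\<Sum> cos (\<alpha> e) / sin (\<theta> e)\<close>, which vanishes by the symmetry \<open>e \<mapsto> N - e\<close>, and the Dirichlet-kernel sum
  \<open>\<Sum> sin (\<alpha> e) / sin (\<theta> e) = N + 1 - 2k\<close>. The resulting \<open>N\<close> eigenvalues are distinct, and the
  characteristic polynomial has degree \<open>N\<close>, so there are no others.
\<close>

lemma cos_minus_odd_multiple_pi: "cos (x - (2 * real k - 1) * pi) = - cos x"
proof -
  have "x - (2 * real k - 1) * pi = (x - real (2 * k) * pi) + pi"
    by (simp add: algebra_simps)
  then show ?thesis
    by (simp only: cos_periodic_pi cos_diff cos_npi sin_npi) (simp add: power_mult)
qed

lemma sum_cos_even_multiples:
  "2 * sin x * (\<Sum>e<n. cos (2 * real e * x)) = sin ((2 * real n - 1) * x) + sin x"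
proof -
  have telescope: "2 * sin x * cos (2 * real e * x) = sin ((2 * real (Suc e) - 1) * x) - sin ((2 * real e - 1) * x)"
    for e :: nat
  proof -
    have "sin ((2 * real (Suc e) - 1) * x) = sin (2 * real e * x + x)"
      and "sin ((2 * real e - 1) * x) = sin (2 * real e * x - x)"
      by (simp_all add: algebra_simps)
    then show ?thesis by (simp add: sin_add sin_diff)
  qed
  have "2 * sin x * (\<Sum>e<n. cos (2 * real e * x))
      = (\<Sum>e<n. sin ((2 * real (Suc e) - 1) * x) - sin ((2 * real e - 1) * x))"
    by (simp add: sum_distrib_left telescope)
  also have "\<dots> = sin ((2 * real n - 1) * x) - sin ((2 * real 0 - 1) * x)"
    by (rule sum_lessThan_telescope)
  finally show ?thesis
    by simp
qed

lemma sum_cos_roots_of_unity_eq_zero: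
  assumes "0 < k" "k < N"
  shows "(\<Sum>e<N. cos (2 * real e * (real k * pi / real N))) = 0"
proof -
  define x where "x = real k * pi / real N"
  have "0 < x" "x < pi"
    using assms by (auto simp: x_def field_simps)
  then have "sin x > 0"
    by (rule sin_gt_zero)
  have "(2 * real N - 1) * x = 2 * real k * pi - x"
    using assms by (simp add: x_def field_simps)
  then have "sin ((2 * real N - 1) * x) = - sin x"
    by (simp only: sin_diff sin_2npi cos_2npi)
  with sum_cos_even_multiples[of x N] \<open>sin x > 0\<close> show ?thesis
    by (simp add: x_def)
qed

lemma sin_pi_div_mult_pos:
  assumes "0 < e" "e < N"
  shows "sin (pi / real N * real e) > 0"
  using assms by (intro sin_gt_zero) (auto simp: field_simps)

lemma sum_sin_odd_multiple_div_sin: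
  assumes "1 \<le> k" "k \<le> N"
  shows "(\<Sum>e\<in>{1..<N}. sin ((2 * real k - 1) * (pi / real N) * real e) / sin (pi / real N * real e))
     = real N + 1 - 2 * real k"
  using assms
proof (induction k rule: dec_induct)
  case base
  from assms have "1 \<le> N"
    by simp
  have "sin (pi / real N * real e) \<noteq> 0" if "e \<in> {1..<N}" for e
    using sin_pi_div_mult_pos[of e N] that by simp
  with \<open>1 \<le> N\<close> show ?case
    by (simp add: ac_simps of_nat_diff)
next
  case (step k)
  define \<theta> where "\<theta> = pi / real N"
  have ratio_step: "sin ((2 * real (Suc k) - 1) * y) / sin y = sin ((2 * real k - 1) * y) / sin y + 2 * cos (2 * real k * y)"
    if "sin y \<noteq> 0" for y
  proof -
    have "sin ((2 * real (Suc k) - 1) * y) = sin (2 * real k * y + y)"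
      and "sin ((2 * real k - 1) * y) = sin (2 * real k * y - y)"
      by (simp_all add: algebra_simps)
    with that show ?thesis by (simp add: sin_add sin_diff field_simps)
  qed
  have "(\<Sum>e\<in>{1..<N}. cos (2 * real k * (\<theta> * real e))) = -1"
  proof -
    have "{..<N} = insert 0 {1..<N}"
      using step by auto
    with sum_cos_roots_of_unity_eq_zero[of k N] step show ?thesis
      by (simp add: \<theta>_def ac_simps)
  qed
  moreover have "(\<Sum>e\<in>{1..<N}. sin ((2 * real (Suc k) - 1) * (\<theta> * real e)) / sin (\<theta> * real e))
      = (\<Sum>e\<in>{1..<N}. sin ((2 * real k - 1) * (\<theta> * real e)) / sin (\<theta> * real e)
           + 2 * cos (2 * real k * (\<theta> * real e)))"
  proof (intro sum.cong refl ratio_step)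
    fix e assume "e \<in> {1..<N}"
    then show "sin (\<theta> * real e) \<noteq> 0"
      using sin_pi_div_mult_pos[of e N] by (simp add: \<theta>_def)
  qed
  ultimately show ?case
    using step.IH step.prems by (simp add: \<theta>_def sum.distrib sum_distrib_left[symmetric] mult.assoc)
qed

lemma sum_cos_odd_multiple_div_sin_eq_zero:
  assumes "1 \<le> N"
  shows "(\<Sum>e\<in>{1..<N}. cos ((2 * real k - 1) * (pi / real N) * real e) / sin (pi / real N * real e)) = 0"
proof -
  let ?f = "\<lambda>e. cos ((2 * real k - 1) * (pi / real N) * real e) / sin (pi / real N * real e)"
  have "sum ?f {1..<N} = sum (\<lambda>e. ?f (N + 1 - Suc e)) {1..<N}"
    by (rule sum.atLeastLessThan_rev)
  also have "\<dots> = sum (\<lambda>e. - ?f e) {1..<N}"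
  proof (intro sum.cong refl)
    fix e assume "e \<in> {1..<N}"
    then have "real (N + 1 - Suc e) = real N - real e"
      by auto
    moreover have "(2 * real k - 1) * (pi / real N) * (real N - real e)
        = - ((2 * real k - 1) * (pi / real N) * real e - (2 * real k - 1) * pi)"
      and "pi / real N * (real N - real e) = pi - pi / real N * real e"
      using assms by (simp_all add: field_simps)
    ultimately show "?f (N + 1 - Suc e) = - ?f e"
      by (simp only: cos_minus cos_minus_odd_multiple_pi sin_pi_minus)
  qed
  finally show ?thesis
    by (simp add: sum_negf)
qed

lemma sum_periodic_differences:
  fixes h :: "real \<Rightarrow> 'a::comm_monoid_add"
  assumes periodic: "\<And>x. h (x + real N) = h x" and "i < N"
  shows "(\<Sum>j<N. if j = i then 0 else h (real i - real j)) = (\<Sum>e\<in>{1..<N}. h (real e))"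
proof -
  have "(\<Sum>j<N. if j = i then 0 else h (real i - real j)) = (\<Sum>j\<in>{..<N} - {i}. h (real i - real j))"
    using \<open>i < N\<close> by (simp add: sum.If_cases Diff_eq Int_commute)
  also have "\<dots> = (\<Sum>e\<in>{1..<N}. h (real e))"
  proof (rule sum.reindex_bij_witness[where j = "\<lambda>j. if j < i then i - j else N + i - j"
        and i = "\<lambda>e. if e \<le> i then i - e else N + i - e"])
    fix j assume j: "j \<in> {..<N} - {i}"
    show "h (real (if j < i then i - j else N + i - j)) = h (real i - real j)"
    proof (cases "j < i")
      case False
      then have "real (N + i - j) = (real i - real j) + real N"
        using j by auto
      with False periodic show ?thesis
        by simp
    qed (simp add: of_nat_diff)
  qed (use \<open>i < N\<close> in auto)
  finally show ?thesis .
qed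

text \<open>After reversing the columns of \<open>S_quant N\<close>, the product of the entry at \<open>(i, j)\<close> with the
  matching entry of the eigenvector is \<open>quant_kernel N k \<phi> (i - j)\<close>, where \<open>\<phi>\<close> depends on \<open>i\<close> only.\<close>

definition quant_kernel :: "nat \<Rightarrow> nat \<Rightarrow> real \<Rightarrow> real \<Rightarrow> real" where
  "quant_kernel N k \<phi> d =
     sin (pi / real N) * cos (\<phi> - (2 * real k - 1) * (pi / real N) * d) / sin (pi / real N * d)"

lemma quant_kernel_periodic:
  assumes "1 \<le> N"
  shows "quant_kernel N k \<phi> (d + real N) = quant_kernel N k \<phi> d"
proof -
  have shift_cos: "\<phi> - (2 * real k - 1) * (pi / real N) * (d + real N)
      = (\<phi> - (2 * real k - 1) * (pi / real N) * d) - (2 * real k - 1) * pi"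
    and shift_sin: "pi / real N * (d + real N) = pi / real N * d + pi"
    using assms by (simp_all add: field_simps)
  show ?thesis
    unfolding quant_kernel_def shift_cos shift_sin cos_minus_odd_multiple_pi sin_periodic_pi
    by simp
qed

lemma sum_quant_kernel:
  assumes "1 \<le> k" "k \<le> N"
  shows "(\<Sum>e\<in>{1..<N}. quant_kernel N k \<phi> (real e)) = (real N + 1 - 2 * real k) * sin (pi / real N) * sin \<phi>"
proof -
  let ?\<alpha> = "(2 * real k - 1) * (pi / real N)"
  have "quant_kernel N k \<phi> (real e)
      = sin (pi / real N) * cos \<phi> * (cos (?\<alpha> * real e) / sin (pi / real N * real e))
        + sin (pi / real N) * sin \<phi> * (sin (?\<alpha> * real e) / sin (pi / real N * real e))" for e
    by (simp add: quant_kernel_def cos_diff add_divide_distrib distrib_left)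
  then have "(\<Sum>e\<in>{1..<N}. quant_kernel N k \<phi> (real e))
      = sin (pi / real N) * cos \<phi> * (\<Sum>e\<in>{1..<N}. cos (?\<alpha> * real e) / sin (pi / real N * real e))
        + sin (pi / real N) * sin \<phi> * (\<Sum>e\<in>{1..<N}. sin (?\<alpha> * real e) / sin (pi / real N * real e))"
    by (simp add: sum.distrib sum_distrib_left)
  also have "\<dots> = sin (pi / real N) * cos \<phi> * 0 + sin (pi / real N) * sin \<phi> * (real N + 1 - 2 * real k)"
    using assms by (simp only: sum_cos_odd_multiple_div_sin_eq_zero sum_sin_odd_multiple_div_sin)
  finally show ?thesis
    by simp
qed

definition quant_eigvec :: "nat \<Rightarrow> nat \<Rightarrow> real vec" where
  "quant_eigvec N k = vec N (\<lambda>j. cos ((2 * real k - 1) * (pi / real N) * (real j + 1 / 2) - pi / 4))"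

lemma S_quant_mult_quant_eigvec_nth:
  assumes "1 \<le> N" "i < N"
  shows "(S_quant N *\<^sub>v quant_eigvec N k) $ i
     = (\<Sum>j<N. if j = i then 0
          else quant_kernel N k ((2 * real k - 1) * (pi / real N) * (real i + 1 / 2) + pi / 4) (real i - real j))"
proof -
  define \<theta> where "\<theta> = pi / real N"
  define \<alpha> where "\<alpha> = (2 * real k - 1) * (pi / real N)"
  define \<phi> where "\<phi> = \<alpha> * (real i + 1 / 2) + pi / 4"
  let ?S = "S_quant N" and ?v = "quant_eigvec N k"
  have "(?S *\<^sub>v ?v) $ i = (\<Sum>j<N. ?S $$ (i, j) * ?v $ j)"
    using assms by (simp add: S_quant_def quant_eigvec_def scalar_prod_def lessThan_atLeast0)
  also have "\<dots> = (\<Sum>j<N. ?S $$ (i, N - Suc j) * ?v $ (N - Suc j))"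
    by (rule sum.nat_diff_reindex[symmetric])
  also have "\<dots> = (\<Sum>j<N. if j = i then 0 else quant_kernel N k \<phi> (real i - real j))"
  proof (intro sum.cong refl)
    fix j assume "j \<in> {..<N}"
    then have j: "j < N" by simp
    have reverse: "real (N - Suc j) = real N - 1 - real j"
      using j by (simp add: of_nat_diff)
    show "?S $$ (i, N - Suc j) * ?v $ (N - Suc j) = (if j = i then 0 else quant_kernel N k \<phi> (real i - real j))"
    proof (cases "j = i")
      case True
      with j show ?thesis
        by (simp add: S_quant_def)
    next
      case False
      have "\<theta> * (real (i + 1) + real (N - Suc j + 1) - 1) = \<theta> * (real i - real j) + pi"
        using reverse assms by (simp add: \<theta>_def field_simps)
      then have entry: "?S $$ (i, N - Suc j) = - (sin \<theta> / sin (\<theta> * (real i - real j)))"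
        using False j assms by (simp add: S_quant_def \<theta>_def sin_periodic_pi)
      have "\<alpha> * (real (N - Suc j) + 1 / 2) - pi / 4 = - ((\<phi> - \<alpha> * (real i - real j)) - (2 * real k - 1) * pi)"
        using reverse assms by (simp add: \<alpha>_def \<phi>_def field_simps)
      then have "?v $ (N - Suc j) = - cos (\<phi> - \<alpha> * (real i - real j))"
        using j by (simp only: quant_eigvec_def \<alpha>_def index_vec diff_less zero_less_Suc cos_minus cos_minus_odd_multiple_pi)
      with entry False show ?thesis
        by (simp add: quant_kernel_def \<theta>_def \<alpha>_def)
    qed
  qed
  finally show ?thesis
    unfolding \<phi>_def \<alpha>_def .
qed

lemma S_quant_mult_quant_eigvec:
  assumes "1 \<le> k" "k \<le> N"
  shows "S_quant N *\<^sub>v quant_eigvec N k = ((real N + 1 - 2 * real k) * sin (pi / real N)) \<cdot>\<^sub>v quant_eigvec N k"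
proof (rule eq_vecI)
  show "dim_vec (S_quant N *\<^sub>v quant_eigvec N k) = dim_vec (((real N + 1 - 2 * real k) * sin (pi / real N)) \<cdot>\<^sub>v quant_eigvec N k)"
    by (simp add: S_quant_def quant_eigvec_def)
next
  fix i assume "i < dim_vec (((real N + 1 - 2 * real k) * sin (pi / real N)) \<cdot>\<^sub>v quant_eigvec N k)"
  then have i: "i < N"
    by (simp add: quant_eigvec_def)
  define x where "x = (2 * real k - 1) * (pi / real N) * (real i + 1 / 2)"
  have "(S_quant N *\<^sub>v quant_eigvec N k) $ i
      = (\<Sum>j<N. if j = i then 0 else quant_kernel N k (x + pi / 4) (real i - real j))"
    using assms i unfolding x_def by (intro S_quant_mult_quant_eigvec_nth) simp_all
  also have "\<dots> = (\<Sum>e\<in>{1..<N}. quant_kernel N k (x + pi / 4) (real e))"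
    using assms i by (intro sum_periodic_differences quant_kernel_periodic) simp_all
  also have "\<dots> = (real N + 1 - 2 * real k) * sin (pi / real N) * sin (x + pi / 4)"
    using assms by (rule sum_quant_kernel)
  also have "sin (x + pi / 4) = cos (- (x - pi / 4))"
    by (simp add: sin_cos_eq algebra_simps)
  also have "\<dots> = quant_eigvec N k $ i"
    using i by (simp only: cos_minus) (simp add: x_def quant_eigvec_def)
  finally show "(S_quant N *\<^sub>v quant_eigvec N k) $ i = (((real N + 1 - 2 * real k) * sin (pi / real N)) \<cdot>\<^sub>v quant_eigvec N k) $ i"
    using i by (simp add: quant_eigvec_def)
qed

lemma cos_eq_zero_imp_pi_half:
  assumes "cos x = 0" "- pi / 2 < x" "x < pi"
  shows "x = pi / 2"
proof -
  obtain m :: int where x: "x = real_of_int m * pi + pi / 2"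
    using assms(1) cos_zero_iff_int2 by blast
  have "(- 1) * pi < real_of_int m * pi" "real_of_int m * pi < (1 / 2) * pi"
    using assms(2,3) unfolding x by linarith+
  then have "- 1 < real_of_int m" "real_of_int m < 1 / 2"
    by (simp_all only: mult_less_cancel_right pi_gt_zero) simp_all
  then have "m = 0"
    by linarith
  with x show ?thesis
    by simp
qed

lemma quant_eigvec_nonzero:
  assumes "1 \<le> k" "k \<le> N"
  shows "quant_eigvec N k \<noteq> 0\<^sub>v N"
proof
  assume zero: "quant_eigvec N k = 0\<^sub>v N"
  define \<alpha> where "\<alpha> = (2 * real k - 1) * (pi / real N)"
  have entry: "quant_eigvec N k $ j = cos (\<alpha> * (real j + 1 / 2) - pi / 4)" if "j < N" for j
    using that by (simp add: quant_eigvec_def \<alpha>_def)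
  have "(2 * real k - 1) * pi < (2 * real N) * pi"
    using assms by (intro mult_strict_right_mono) auto
  then have "0 < \<alpha>" "\<alpha> < 2 * pi"
    using assms by (auto simp: \<alpha>_def field_simps)
  moreover have "cos (\<alpha> * (real 0 + 1 / 2) - pi / 4) = 0"
    using zero entry[of 0] assms by simp
  ultimately have "\<alpha> / 2 - pi / 4 = pi / 2"
    by (intro cos_eq_zero_imp_pi_half) auto
  then have \<alpha>: "\<alpha> = 3 * pi / 2"
    by simp
  have "N \<noteq> 1"
    using assms \<alpha> by (auto simp: \<alpha>_def)
  with assms have "1 < N"
    by simp
  moreover have "\<alpha> * (real 1 + 1 / 2) - pi / 4 = 2 * pi"
    using \<alpha> by simp
  ultimately show False
    using zero entry[of 1] by simp
qed

lemma eigenvalue_S_quant: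
  assumes "1 \<le> k" "k \<le> N"
  shows "eigenvalue (S_quant N) ((real N + 1 - 2 * real k) * sin (pi / real N))"
proof -
  have "dim_row (S_quant N) = N" "quant_eigvec N k \<in> carrier_vec N"
    by (simp_all add: S_quant_def quant_eigvec_def)
  with S_quant_mult_quant_eigvec[OF assms] quant_eigvec_nonzero[OF assms] show ?thesis
    unfolding eigenvalue_def eigenvector_def by metis
qed

lemma eigenvalues_finite_card_le:
  fixes A :: "'a::field mat"
  assumes "A \<in> carrier_mat n n"
  shows "finite {x. eigenvalue A x}" and "card {x. eigenvalue A x} \<le> n"
proof -
  have roots: "{x. eigenvalue A x} = {x. poly (char_poly A) x = 0}"
    using eigenvalue_root_char_poly[OF assms] by auto
  have "degree (char_poly A) = n" "char_poly A \<noteq> 0"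
    using degree_monic_char_poly[OF assms] by auto
  then show "finite {x. eigenvalue A x}" "card {x. eigenvalue A x} \<le> n"
    unfolding roots using poly_roots_finite card_poly_roots_bound by metis+
qed

theorem mainTheorem5:
  fixes N :: nat
  assumes "N \<ge> 1"
  shows "{x. eigenvalue (S_quant N) x} =
         {(real N + 1 - 2 * real k) * sin (pi / real N) | k. k \<in> {1..N}}"
proof -
  define \<mu> where "\<mu> k = (real N + 1 - 2 * real k) * sin (pi / real N)" for k
  have "inj_on \<mu> {1..N}"
  proof (cases "N = 1")
    case False
    with assms have "sin (pi / real N) > 0"
      using sin_pi_div_mult_pos[of 1 N] by simp
    then show ?thesis
      by (auto simp: inj_on_def \<mu>_def)
  qed simp
  then have "card (\<mu> ` {1..N}) = N"
    by (simp add: card_image)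
  moreover have "\<mu> ` {1..N} \<subseteq> {x. eigenvalue (S_quant N) x}"
    using eigenvalue_S_quant by (auto simp: \<mu>_def)
  moreover have "S_quant N \<in> carrier_mat N N"
    by (simp add: S_quant_def)
  ultimately have "{x. eigenvalue (S_quant N) x} = \<mu> ` {1..N}"
    using eigenvalues_finite_card_le by (metis card_seteq)
  also have "\<dots> = {(real N + 1 - 2 * real k) * sin (pi / real N) | k. k \<in> {1..N}}"
    by (auto simp: \<mu>_def)
  finally show ?thesis .
qed

end
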